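(* Let $T=(T_t)_{t\ge0}$ be a subordinator with Laplace exponent $\phi$, i.e. $\mathbb{E}e^{-\lambda T_t}=e^{-t\phi(\lambda)}$ for $\lambda>0$. Assume that $\phi$ varies regularly at $0$ (at $\infty$, respectively) with index $\gamma\in[0,1)$. Then \[ \mathbb{P}(T_t\ge r)\sim\frac{1}{\Gamma(1-\gamma)}\,t\,\phi(r^{-1}),\qquad r\to\infty\ (r\to0,\text{ resp.})\ \text{ and }\ t\phi(r^{-1})\to0 . \]
   Context: A subordinator is a non-decreasing Lévy process. A function $\ell:(0,\infty)\to(0,\infty)$ varies regularly at $\infty$ (at $0$) with index $\alpha$ if $\ell(\lambda s)/\ell(s)\to\lambda^\alpha$ as $s\to\infty$ ($s\to0$) for every $\lambda>0$. Notation: for functions $f,g,h$ of $(t,r)\in(0,\infty)^2$, "$f(t,r)\sim g(t,r)$, $r\to a$ and $h(t,r)\to 0$" means $\lim f(t,r)/g(t,r)=1$ where the limit is taken jointly as $r\to a$ and $h(t,r)\to0$ (for every $\varepsilon>0$ there is a neighbourhood $U$ of $a$ and $\delta>0$ with $|f/g-1|<\varepsilon$ whenever $r\in U$, $h(t,r)<\delta$). *)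

theory Defs
  imports "HOL-Probability.Probability"
begin

definition subordinator :: "'a measure \<Rightarrow> (real \<Rightarrow> 'a \<Rightarrow> real) \<Rightarrow> bool" where
  "subordinator M T \<longleftrightarrow>
     prob_space M \<and>
     (\<forall>t\<ge>0. T t \<in> borel_measurable M) \<and>
     (\<forall>\<omega>\<in>space M. T 0 \<omega> = 0) \<and>
     (\<forall>\<omega>\<in>space M. mono_on {0..} (\<lambda>t. T t \<omega>)) \<and>
     (\<forall>\<omega>\<in>space M. \<forall>t\<ge>0. continuous (at_right t) (\<lambda>s. T s \<omega>)) \<and>
     (\<forall>(n::nat) (s::nat \<Rightarrow> real). s 0 \<ge> 0 \<longrightarrow> (\<forall>i<n. s i \<le> s (Suc i)) \<longrightarrow>
        prob_space.indep_vars M (\<lambda>_. borel) (\<lambda>i \<omega>. T (s (Suc i)) \<omega> - T (s i) \<omega>) {..<n}) \<and>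
     (\<forall>s\<ge>0. \<forall>t\<ge>0. distr M borel (\<lambda>\<omega>. T (s + t) \<omega> - T s \<omega>) = distr M borel (T t))"

definition laplace_exponent :: "'a measure \<Rightarrow> (real \<Rightarrow> 'a \<Rightarrow> real) \<Rightarrow> (real \<Rightarrow> real) \<Rightarrow> bool" where
  "laplace_exponent M T \<phi> \<longleftrightarrow>
     (\<forall>t\<ge>0. \<forall>l>0. prob_space.expectation M (\<lambda>\<omega>. exp (- l * T t \<omega>)) = exp (- t * \<phi> l))"

definition regvar_at_top :: "(real \<Rightarrow> real) \<Rightarrow> real \<Rightarrow> bool" where
  "regvar_at_top L \<alpha> \<longleftrightarrow> (\<forall>s>0. L s > 0) \<and>
     (\<forall>c>0. ((\<lambda>s. L (c * s) / L s) \<longlongrightarrow> c powr \<alpha>) at_top)"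

definition regvar_at_0 :: "(real \<Rightarrow> real) \<Rightarrow> real \<Rightarrow> bool" where
  "regvar_at_0 L \<alpha> \<longleftrightarrow> (\<forall>s>0. L s > 0) \<and>
     (\<forall>c>0. ((\<lambda>s. L (c * s) / L s) \<longlongrightarrow> c powr \<alpha>) (at_right 0))"

definition joint_equiv_r_top ::
  "(real \<Rightarrow> real \<Rightarrow> real) \<Rightarrow> (real \<Rightarrow> real \<Rightarrow> real) \<Rightarrow> (real \<Rightarrow> real \<Rightarrow> real) \<Rightarrow> bool" where
  "joint_equiv_r_top f g h \<longleftrightarrow> (\<forall>\<epsilon>>0. \<exists>R \<delta>. \<delta> > 0 \<and>
     (\<forall>t r. t > 0 \<longrightarrow> r > 0 \<longrightarrow> r > R \<longrightarrow> h t r < \<delta> \<longrightarrow> \<bar>f t r / g t r - 1\<bar> < \<epsilon>))"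

definition joint_equiv_r_0 ::
  "(real \<Rightarrow> real \<Rightarrow> real) \<Rightarrow> (real \<Rightarrow> real \<Rightarrow> real) \<Rightarrow> (real \<Rightarrow> real \<Rightarrow> real) \<Rightarrow> bool" where
  "joint_equiv_r_0 f g h \<longleftrightarrow> (\<forall>\<epsilon>>0. \<exists>\<rho> \<delta>. \<rho> > 0 \<and> \<delta> > 0 \<and>
     (\<forall>t r. t > 0 \<longrightarrow> r > 0 \<longrightarrow> r < \<rho> \<longrightarrow> h t r < \<delta> \<longrightarrow> \<bar>f t r / g t r - 1\<bar> < \<epsilon>))"

end

(*
  P(T_t >= r) is the expectation of the indicator of [1, oo) at T_t / r.  For an exponential
  polynomial h(x) = sum_k c_k (e^(-k x) - e^(-(k+1) x)) the Laplace exponent gives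
  E h(T_t / r) = sum_k c_k (e^(-t phi(k/r)) - e^(-t phi((k+1)/r))), and since
  1 - e^(-t phi(k/r)) ~ t phi(k/r) ~ k^gamma t phi(1/r) in the joint limit, E h(T_t / r) is
  asymptotic to t phi(1/r) sum_k c_k ((k+1)^gamma - k^gamma).  By Stone-Weierstrass in the
  variable e^(-x), the indicator can be squeezed on [0, oo) between two exponential polynomials
  whose limit coefficients are arbitrarily close to 1/Gamma(1-gamma).  For gamma > 0 these
  coefficients are read off by integrating against the weight x^(-gamma-1), using
  int_0^oo x^(-gamma-1) (1 - e^(-s x)) dx = s^gamma Gamma(1-gamma) / gamma;
  for gamma = 0 the coefficient is just c_0.
*)
theory Submission
  imports Defs
begin

section \<open>Integrals against the stable Levy density\<close>

(* Up to the factor g / Gamma (1 - g), the Levy density of the g-stable subordinator. *)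
definition power_weight :: "real \<Rightarrow> real \<Rightarrow> real" where
  "power_weight g x = indicator {0..} x * x powr (-g-1)"

lemma power_weight_nonneg: "0 \<le> power_weight g x"
  by (simp add: power_weight_def)

lemma power_weight_measurable [measurable]: "power_weight g \<in> borel_measurable borel"
  unfolding power_weight_def by measurable

lemma nn_integral_power_weight_tail:
  assumes g: "0 < g" and u: "0 < u"
  shows "(\<integral>\<^sup>+x. ennreal (power_weight g x * indicator {u..} x) \<partial>lborel) = ennreal (u powr (-g) / g)"
proof -
  have "(\<integral>\<^sup>+x. ennreal (x powr (-g-1)) * indicator {u..} x \<partial>lborel) = ennreal (0 - (- (u powr (-g) / g)))"
  proof (rule nn_integral_FTC_atLeast)
    show "((\<lambda>x. - (x powr (-g) / g)) has_real_derivative x powr (-g-1)) (at x)" if "u \<le> x" for x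
      using that u g by (auto intro!: derivative_eq_intros simp: field_simps)
    have "((\<lambda>x. x powr (-g)) \<longlongrightarrow> 0) at_top"
      using g by (intro tendsto_neg_powr filterlim_ident) auto
    then show "((\<lambda>x. - (x powr (-g) / g)) \<longlongrightarrow> 0) at_top"
      using tendsto_minus[OF tendsto_divide_zero[of _ _ g]] by fastforce
  qed auto
  moreover have "ennreal (power_weight g x * indicator {u..} x) = ennreal (x powr (-g-1)) * indicator {u..} x" for x
    using u by (simp add: power_weight_def indicator_def)
  ultimately show ?thesis
    by simp
qed

lemma has_bochner_integral_power_weight_tail:
  assumes "0 < g" "0 < u"
  shows "has_bochner_integral lborel (\<lambda>x. power_weight g x * indicator {u..} x) (u powr (-g) / g)"
  using assms by (intro has_bochner_integral_nn_integral nn_integral_power_weight_tail)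
    (auto simp: power_weight_nonneg)

lemma nn_integral_Gamma_scaled:
  assumes a: "0 < a" and s: "0 < s"
  shows "(\<integral>\<^sup>+u. ennreal (indicator {0..} u * u powr (a - 1) * exp (- (s * u))) \<partial>lborel)
       = ennreal (Gamma a / s powr a)"
proof -
  define f where "f u = indicator {0..} u * u powr (a - 1) * exp (- (s * u))" for u :: real
  have "(\<integral>\<^sup>+v. ennreal (f (v / s)) \<partial>lborel) = (\<integral>\<^sup>+u. ennreal (f u) \<partial>distr lborel borel ((*) (1/s)))"
    by (subst nn_integral_distr) (auto simp: f_def field_simps)
  also have "\<dots> = (\<integral>\<^sup>+u. ennreal s * ennreal (f u) \<partial>lborel)"
    using s by (simp add: lborel_distr_mult nn_integral_density f_def)
  also have "\<dots> = ennreal s * (\<integral>\<^sup>+u. ennreal (f u) \<partial>lborel)"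
    by (rule nn_integral_cmult) (simp add: f_def)
  finally have scaled: "(\<integral>\<^sup>+v. ennreal (f (v / s)) \<partial>lborel) = ennreal s * (\<integral>\<^sup>+u. ennreal (f u) \<partial>lborel)" .
  have "ennreal (f (v / s)) = ennreal (s powr (1 - a)) * ennreal (indicator {0..} v * v powr (a - 1) / exp v)" for v
    using s by (cases "0 \<le> v") (simp_all add: f_def powr_divide powr_diff exp_minus ennreal_mult'[symmetric] field_simps)
  then have "(\<integral>\<^sup>+v. ennreal (f (v / s)) \<partial>lborel) = ennreal (s powr (1 - a)) * ennreal (Gamma a)"
    using a by (simp add: nn_integral_cmult Gamma_conv_nn_integral_real)
  with scaled have "ennreal s * (\<integral>\<^sup>+u. ennreal (f u) \<partial>lborel) = ennreal s * ennreal (Gamma a / s powr a)"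
    using s a by (simp add: ennreal_mult'[symmetric] powr_diff Gamma_real_pos less_imp_le field_simps)
  then show ?thesis
    using s by (simp add: ennreal_mult_cancel_left f_def)
qed

lemma nn_integral_exp_density_Icc:
  assumes "0 < s" "0 \<le> x"
  shows "(\<integral>\<^sup>+u. ennreal (s * exp (- (s * u))) * indicator {0..x} u \<partial>lborel) = ennreal (1 - exp (- (s * x)))"
proof -
  have "((\<lambda>u. s * exp (- (s * u))) has_integral (- exp (- (s * x)) - - exp (- (s * 0)))) {0..x}"
    using assms by (intro fundamental_theorem_of_calculus)
      (auto intro!: derivative_eq_intros simp: has_real_derivative_iff_has_vector_derivative[symmetric])
  then show ?thesis
    using assms by (subst nn_integral_has_integral_lebesgue') auto
qed

lemma nn_integral_power_weight_laplace:
  assumes g: "0 < g" "g < 1" and s: "0 < s"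
  shows "(\<integral>\<^sup>+x. ennreal (power_weight g x * (1 - exp (- (s * x)))) \<partial>lborel) = ennreal (s powr g * Gamma (1 - g) / g)"
proof -
  \<comment> \<open>Write \<open>1 - exp (- (s * x))\<close> as the integral of \<open>s * exp (- (s * u))\<close> over \<open>[0, x]\<close> and swap
    the integrals: the inner integral becomes a tail of the weight.\<close>
  define F where "F = (\<lambda>(x, u). ennreal (power_weight g x) * ennreal (s * exp (- (s * u))) * indicator {0..x} u)"
  have [measurable]: "Measurable.pred (borel \<Otimes>\<^sub>M borel) (\<lambda>p::real \<times> real. snd p \<in> {0..fst p})"
    by (simp add: atLeastAtMost_iff) measurable
  have [measurable]: "F \<in> borel_measurable (lborel \<Otimes>\<^sub>M lborel)"
    unfolding F_def by (simp add: case_prod_beta')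
  have inner_u: "(\<integral>\<^sup>+u. F (x, u) \<partial>lborel) = ennreal (power_weight g x * (1 - exp (- (s * x))))" for x
  proof (cases "0 \<le> x")
    case True
    have "(\<integral>\<^sup>+u. F (x, u) \<partial>lborel)
        = ennreal (power_weight g x) * (\<integral>\<^sup>+u. ennreal (s * exp (- (s * u))) * indicator {0..x} u \<partial>lborel)"
      unfolding F_def by (subst nn_integral_cmult[symmetric]) (auto simp: mult.assoc)
    also have "\<dots> = ennreal (power_weight g x) * ennreal (1 - exp (- (s * x)))"
      by (simp only: nn_integral_exp_density_Icc[OF s True])
    finally show ?thesis
      by (simp add: ennreal_mult' power_weight_nonneg)
  qed (simp add: F_def power_weight_def)
  have inner_x: "(\<integral>\<^sup>+x. F (x, u) \<partial>lborel) = ennreal (s / g) * ennreal (indicator {0..} u * u powr ((1 - g) - 1) * exp (- (s * u)))"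
    if "u \<noteq> 0" for u
  proof (cases "0 < u")
    case True
    have "(\<integral>\<^sup>+x. F (x, u) \<partial>lborel) = ennreal (s * exp (- (s * u))) * (\<integral>\<^sup>+x. ennreal (power_weight g x * indicator {u..} x) \<partial>lborel)"
      using True by (subst nn_integral_cmult[symmetric]) (auto simp: F_def indicator_def mult_ac intro!: nn_integral_cong)
    then show ?thesis
      using True s g by (simp add: nn_integral_power_weight_tail ennreal_mult'[symmetric] powr_minus field_simps)
  next
    case False
    with that show ?thesis by (simp add: F_def indicator_def)
  qed
  have "(\<integral>\<^sup>+x. ennreal (power_weight g x * (1 - exp (- (s * x)))) \<partial>lborel) = (\<integral>\<^sup>+x. \<integral>\<^sup>+u. F (x, u) \<partial>lborel \<partial>lborel)"
    by (simp add: inner_u)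
  also have "\<dots> = (\<integral>\<^sup>+u. \<integral>\<^sup>+x. F (x, u) \<partial>lborel \<partial>lborel)"
    by (subst lborel_pair.Fubini') (auto simp: case_prod_unfold)
  also have "\<dots> = (\<integral>\<^sup>+u. ennreal (s / g) * ennreal (indicator {0..} u * u powr ((1 - g) - 1) * exp (- (s * u))) \<partial>lborel)"
    by (intro nn_integral_cong_AE eventually_mono[OF AE_lborel_singleton[of 0]]) (simp add: inner_x)
  also have "\<dots> = ennreal (s / g) * ennreal (Gamma (1 - g) / s powr (1 - g))"
    using g s nn_integral_Gamma_scaled[of "1 - g" s] by (simp add: nn_integral_cmult)
  also have "\<dots> = ennreal (s powr g * Gamma (1 - g) / g)"
    using g s by (simp add: ennreal_mult'[symmetric] powr_diff field_simps)
  finally show ?thesis .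
qed

lemma has_bochner_integral_power_weight_laplace:
  assumes g: "0 < g" "g < 1" and s: "0 \<le> s"
  shows "has_bochner_integral lborel (\<lambda>x. power_weight g x * (1 - exp (- (s * x))))
           (s powr g * Gamma (1 - g) / g)"
proof (cases "s = 0")
  case False
  with s have s: "0 < s"
    by simp
  have "0 \<le> power_weight g x * (1 - exp (- (s * x)))" for x
    using s by (cases "0 \<le> x") (auto simp: power_weight_def)
  then show ?thesis
    using g s by (intro has_bochner_integral_nn_integral nn_integral_power_weight_laplace)
      (auto simp: Gamma_real_pos less_imp_le)
qed (simp add: has_bochner_integral_zero)

lemma has_bochner_integral_mono:
  fixes f h :: "'a \<Rightarrow> real"
  assumes "has_bochner_integral M f I" "has_bochner_integral M h J" "AE x in M. f x \<le> h x"
  shows "I \<le> J"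
proof -
  have "integral\<^sup>L M f \<le> integral\<^sup>L M h"
    using integrable.intros[OF assms(1)] integrable.intros[OF assms(2)] assms(3)
    by (rule integral_mono_AE)
  then show ?thesis
    using assms by (simp add: has_bochner_integral_integral_eq)
qed

lemma power_weight_mult_mono:
  assumes "0 \<le> x \<Longrightarrow> f x \<le> h x"
  shows "power_weight g x * f x \<le> power_weight g x * h x"
  using assms by (cases "0 \<le> x") (auto simp: power_weight_def intro: mult_left_mono)

section \<open>Exponential polynomials\<close>

definition exp_poly :: "(nat \<Rightarrow> real) \<Rightarrow> nat \<Rightarrow> real \<Rightarrow> real" where
  "exp_poly c n x = (\<Sum>k\<le>n. c k * (exp (- (real k * x)) - exp (- (real (Suc k) * x))))"

(* The limit of E exp_poly c n (T_t / r) / (t phi(1/r)) when phi is regularly varying with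
   index g.  Since 0 powr 0 = 0, the k = 0 summand is c 0 also for g = 0. *)
definition exp_poly_limit :: "real \<Rightarrow> (nat \<Rightarrow> real) \<Rightarrow> nat \<Rightarrow> real" where
  "exp_poly_limit g c n = (\<Sum>k\<le>n. c k * (real (Suc k) powr g - real k powr g))"

lemma exp_poly_eq_poly: "exp_poly c n x = (1 - exp (-x)) * (\<Sum>k\<le>n. c k * exp (-x) ^ k)"
proof -
  have power: "exp (- (real m * x)) = exp (-x) ^ m" for m
    by (metis exp_of_nat_mult mult_minus_right)
  have summand: "c k * (exp (- (real k * x)) - exp (- (real (Suc k) * x))) = (1 - exp (-x)) * (c k * exp (-x) ^ k)" for k
    by (simp only: power power_Suc) (simp add: algebra_simps)
  show ?thesis
    unfolding exp_poly_def sum_distrib_left by (intro sum.cong refl summand)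
qed

lemma exp_poly_shift: "exp_poly (c(0 := c 0 + e)) n x = exp_poly c n x + e * (1 - exp (-x))"
proof -
  have "exp_poly (c(0 := c 0 + e)) n x
      = exp_poly c n x + (\<Sum>k\<le>n. if k = 0 then e * (exp (- (real k * x)) - exp (- (real (Suc k) * x))) else 0)"
    unfolding exp_poly_def sum.distrib[symmetric] by (intro sum.cong) (auto simp: algebra_simps)
  then show ?thesis
    by simp
qed

lemma exp_poly_limit_0: "exp_poly_limit 0 c n = c 0"
proof -
  have "exp_poly_limit 0 c n = (\<Sum>k\<le>n. if k = 0 then c k else 0)"
    unfolding exp_poly_limit_def by (intro sum.cong) auto
  then show ?thesis
    by simp
qed

lemma has_bochner_integral_power_weight_exp_poly:
  assumes g: "0 < g" "g < 1"
  shows "has_bochner_integral lborel (\<lambda>x. power_weight g x * exp_poly c n x)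
           (Gamma (1 - g) / g * exp_poly_limit g c n)"
proof -
  let ?L = "\<lambda>s x. power_weight g x * (1 - exp (- (s * x)))"
  have "has_bochner_integral lborel (\<lambda>x. \<Sum>k\<le>n. c k * (?L (real (Suc k)) x - ?L (real k) x))
      (\<Sum>k\<le>n. c k * (real (Suc k) powr g * Gamma (1 - g) / g - real k powr g * Gamma (1 - g) / g))"
    using g by (intro has_bochner_integral_sum has_bochner_integral_mult_right has_bochner_integral_diff
        has_bochner_integral_power_weight_laplace) auto
  moreover have "(\<Sum>k\<le>n. c k * (?L (real (Suc k)) x - ?L (real k) x)) = power_weight g x * exp_poly c n x" for x
    unfolding exp_poly_def sum_distrib_left by (intro sum.cong) (auto simp: algebra_simps)
  moreover have "(\<Sum>k\<le>n. c k * (real (Suc k) powr g * Gamma (1 - g) / g - real k powr g * Gamma (1 - g) / g))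
      = Gamma (1 - g) / g * exp_poly_limit g c n"
    unfolding exp_poly_limit_def sum_distrib_left by (intro sum.cong) (auto simp: algebra_simps)
  ultimately show ?thesis
    by simp
qed

lemma exp_poly_limit_le_if_below_indicator:
  assumes g: "0 < g" "g < 1" and below: "\<forall>x\<ge>0. exp_poly c n x \<le> indicator {1..} x"
  shows "exp_poly_limit g c n \<le> 1 / Gamma (1 - g)"
proof -
  have "Gamma (1 - g) / g * exp_poly_limit g c n \<le> 1 powr (-g) / g"
    using below by (intro has_bochner_integral_mono[OF has_bochner_integral_power_weight_exp_poly[OF g]
          has_bochner_integral_power_weight_tail] AE_I2 power_weight_mult_mono) (auto simp: g)
  then show ?thesis
    using g Gamma_real_pos[of "1 - g"] by (simp add: field_simps)
qed

lemma exp_poly_limit_ge_if_above_indicator: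
  assumes g: "0 < g" "g < 1" and above: "\<forall>x\<ge>0. indicator {1..} x \<le> exp_poly c n x"
  shows "1 / Gamma (1 - g) \<le> exp_poly_limit g c n"
proof -
  have "1 powr (-g) / g \<le> Gamma (1 - g) / g * exp_poly_limit g c n"
    using above by (intro has_bochner_integral_mono[OF has_bochner_integral_power_weight_tail
          has_bochner_integral_power_weight_exp_poly[OF g]] AE_I2 power_weight_mult_mono) (auto simp: g)
  then show ?thesis
    using g Gamma_real_pos[of "1 - g"] by (simp add: field_simps)
qed

lemma exp_poly_limit_diff_le:
  assumes g: "0 < g" "g < 1" and ab: "0 < a" "a \<le> b"
    and gap: "\<forall>x\<ge>0. exp_poly cp np x - exp_poly cm nm x \<le> d * (1 - exp (-x)) + indicator {a..b} x"
  shows "exp_poly_limit g cp np - exp_poly_limit g cm nm \<le> d + g / Gamma (1 - g) * ((b - a) * a powr (-g-1))"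
proof -
  let ?G = "Gamma (1 - g)"
  have G: "0 < ?G"
    using g by (simp add: Gamma_real_pos)
  have pointwise: "power_weight g x * exp_poly cp np x - power_weight g x * exp_poly cm nm x
      \<le> d * (power_weight g x * (1 - exp (- (1 * x)))) + a powr (-g-1) * indicator {a..b} x" for x
  proof -
    have "power_weight g x * indicator {a..b} x \<le> a powr (-g-1) * indicator {a..b} x"
      using ab g by (auto simp: power_weight_def indicator_def intro: powr_mono2')
    moreover have "power_weight g x * (exp_poly cp np x - exp_poly cm nm x)
        \<le> power_weight g x * (d * (1 - exp (-x)) + indicator {a..b} x)"
      using gap by (intro power_weight_mult_mono) auto
    ultimately show ?thesis
      by (simp add: algebra_simps)
  qed
  have lhs: "has_bochner_integral lborel (\<lambda>x. power_weight g x * exp_poly cp np x - power_weight g x * exp_poly cm nm x)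
      (?G / g * exp_poly_limit g cp np - ?G / g * exp_poly_limit g cm nm)"
    using g by (intro has_bochner_integral_diff has_bochner_integral_power_weight_exp_poly)
  have rhs: "has_bochner_integral lborel
      (\<lambda>x. d * (power_weight g x * (1 - exp (- (1 * x)))) + a powr (-g-1) * indicator {a..b} x)
      (d * (1 powr g * ?G / g) + a powr (-g-1) * measure lborel {a..b})"
    using g ab by (intro has_bochner_integral_add has_bochner_integral_mult_right
        has_bochner_integral_power_weight_laplace has_bochner_integral_real_indicator) auto
  from has_bochner_integral_mono[OF lhs rhs AE_I2[OF pointwise]]
  have "?G / g * (exp_poly_limit g cp np - exp_poly_limit g cm nm) \<le> ?G / g * d + (b - a) * a powr (-g-1)"
    using ab by (simp add: algebra_simps)
  then have "exp_poly_limit g cp np - exp_poly_limit g cm nm \<le> (?G / g * d + (b - a) * a powr (-g-1)) / (?G / g)"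
    using g G by (subst pos_le_divide_eq) (auto simp: mult.commute)
  also have "\<dots> = d + g / ?G * ((b - a) * a powr (-g-1))"
    using g G by (simp add: field_simps less_imp_neq[OF G, symmetric])
  finally show ?thesis .
qed

section \<open>Squeezing the indicator of [1, oo)\<close>

definition ramp :: "real \<Rightarrow> real \<Rightarrow> real \<Rightarrow> real" where
  "ramp lo hi y = max 0 (min 1 ((hi - y) / (hi - lo)))"

lemma ramp_nonneg: "0 \<le> ramp lo hi y"
  by (simp add: ramp_def)

lemma ramp_le_1: "ramp lo hi y \<le> 1"
  by (simp add: ramp_def)

lemma continuous_on_ramp: "continuous_on S (ramp lo hi)"
  unfolding ramp_def divide_inverse by (intro continuous_intros)

lemma indicator_atMost_le_ramp: "lo < hi \<Longrightarrow> indicator {..lo} y \<le> ramp lo hi y"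
  by (auto simp: ramp_def indicator_def)

lemma ramp_le_indicator_atMost: "lo < hi \<Longrightarrow> ramp lo hi y \<le> indicator {..hi} y"
  by (auto simp: ramp_def indicator_def divide_nonpos_pos)

lemma ramp_diff_le_indicator:
  assumes "lo1 < hi1" "lo2 < hi2" "lo1 \<le> lo2" "hi1 \<le> hi2"
  shows "ramp lo2 hi2 y - ramp lo1 hi1 y \<le> indicator {lo1..hi2} y"
proof (cases "lo1 \<le> y \<and> y \<le> hi2")
  case True
  then show ?thesis
    using ramp_le_1[of lo2 hi2 y] ramp_nonneg[of lo1 hi1 y] by simp
next
  case False
  then have "y < lo1 \<or> hi2 < y"
    by auto
  then have "ramp lo2 hi2 y = ramp lo1 hi1 y"
    using assms by (auto simp: ramp_def divide_nonpos_pos)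
  then show ?thesis
    by simp
qed

lemma mult_ramp_div_cancel:
  assumes "lo < hi" "hi < 1"
  shows "(1 - y) * (ramp lo hi y / (1 - min y hi)) = ramp lo hi y"
proof (cases "y \<le> hi")
  case False
  then show ?thesis
    using assms by (simp add: ramp_def divide_nonpos_pos)
qed (use assms in simp)

lemma exp_poly_approx_ramp:
  assumes lo: "0 \<le> lo" "lo < hi" and hi: "hi < 1" and d: "0 < d"
  obtains c n where "\<forall>x\<ge>0. \<bar>exp_poly c n x - ramp lo hi (exp (-x))\<bar> \<le> d * (1 - exp (-x))" "\<bar>c 0 - 1\<bar> \<le> d"
proof -
  \<comment> \<open>Dividing by \<open>1 - min y hi\<close> rather than \<open>1 - y\<close> keeps \<open>q\<close> continuous at \<open>y = 1\<close>;
    the two agree where the ramp does not vanish.\<close>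
  define q where "q y = ramp lo hi y / (1 - min y hi)" for y
  have "continuous_on {0..1} q"
    unfolding q_def using hi by (intro continuous_intros continuous_on_ramp) auto
  then obtain p where p: "real_polynomial_function p" "\<And>y. y \<in> {0..1} \<Longrightarrow> \<bar>q y - p y\<bar> < d"
    using Stone_Weierstrass_real_polynomial_function[of "{0..1}" q d] d by auto
  obtain c n where c: "p = (\<lambda>y. \<Sum>i\<le>n. c i * y ^ i)"
    using real_polynomial_function_imp_sum[OF p(1)] by blast
  have q_mult: "(1 - y) * q y = ramp lo hi y" for y
    unfolding q_def using lo(2) hi by (rule mult_ramp_div_cancel)
  show ?thesis
  proof (rule that)
    show "\<forall>x\<ge>0. \<bar>exp_poly c n x - ramp lo hi (exp (-x))\<bar> \<le> d * (1 - exp (-x))"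
    proof (intro allI impI)
      fix x :: real
      assume "0 \<le> x"
      then have y: "exp (-x) \<in> {0..1}"
        by auto
      have "exp_poly c n x - ramp lo hi (exp (-x)) = (1 - exp (-x)) * (p (exp (-x)) - q (exp (-x)))"
        by (simp add: exp_poly_eq_poly c q_mult[symmetric] algebra_simps)
      moreover have "\<bar>p (exp (-x)) - q (exp (-x))\<bar> * (1 - exp (-x)) \<le> d * (1 - exp (-x))"
        using p(2)[OF y] y by (intro mult_right_mono) auto
      ultimately show "\<bar>exp_poly c n x - ramp lo hi (exp (-x))\<bar> \<le> d * (1 - exp (-x))"
        using y by (simp add: abs_mult mult.commute)
    qed
    have "q 0 = 1" "p 0 = c 0"
      using lo by (simp_all add: q_def ramp_def c)
    then show "\<bar>c 0 - 1\<bar> \<le> d"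
      using p(2)[of 0] by simp
  qed
qed

lemma exp_poly_sandwich_indicator:
  assumes eta: "0 < \<eta>" "\<eta> < 1" and d: "0 < d"
  obtains cm nm cp np where
    "\<forall>x\<ge>0. exp_poly cm nm x \<le> indicator {1..} x"
    "\<forall>x\<ge>0. indicator {1..} x \<le> exp_poly cp np x"
    "\<forall>x\<ge>0. exp_poly cp np x - exp_poly cm nm x \<le> 4 * d * (1 - exp (-x)) + indicator {1-\<eta>..1+\<eta>} x"
    "1 - 2 * d \<le> cm 0" "cp 0 \<le> 1 + 2 * d"
proof -
  \<comment> \<open>In the variable \<open>y = exp (-x)\<close> the indicator of \<open>[1, oo)\<close> is that of \<open>[0, a]\<close>;
    it lies between the ramps from \<open>a'\<close> to \<open>a\<close> and from \<open>a\<close> to \<open>b\<close>.\<close>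
  define a' a b where "a' = exp (- (1 + \<eta>))" and "a = exp (-1 :: real)" and "b = exp (- (1 - \<eta>))"
  have ab: "0 \<le> a'" "a' < a" "a < b" "b < 1"
    using eta by (simp_all add: a'_def a_def b_def)
  obtain cM nm where M: "\<forall>x\<ge>0. \<bar>exp_poly cM nm x - ramp a' a (exp (-x))\<bar> \<le> d * (1 - exp (-x))" "\<bar>cM 0 - 1\<bar> \<le> d"
    using exp_poly_approx_ramp[of a' a d] ab d by auto
  obtain cP np where P: "\<forall>x\<ge>0. \<bar>exp_poly cP np x - ramp a b (exp (-x))\<bar> \<le> d * (1 - exp (-x))" "\<bar>cP 0 - 1\<bar> \<le> d"
    using exp_poly_approx_ramp[of a b d] ab d by auto
  have ind_1: "indicator {1..} x = indicator {..a} (exp (-x))" for x :: real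
    by (simp add: a_def indicator_def)
  have ind_eta: "indicator {1-\<eta>..1+\<eta>} x = indicator {a'..b} (exp (-x))" for x :: real
    by (auto simp: a'_def b_def indicator_def)
  define cm where "cm = cM(0 := cM 0 + - d)"
  define cp where "cp = cP(0 := cP 0 + d)"
  have lower: "exp_poly cm nm x \<le> indicator {1..} x"
    and upper: "indicator {1..} x \<le> exp_poly cp np x"
    and gap: "exp_poly cp np x - exp_poly cm nm x \<le> 4 * d * (1 - exp (-x)) + indicator {1-\<eta>..1+\<eta>} x"
    if x: "0 \<le> x" for x
  proof -
    note M_x = M(1)[rule_format, OF x] and P_x = P(1)[rule_format, OF x]
    show "exp_poly cm nm x \<le> indicator {1..} x"
      using M_x ramp_le_indicator_atMost[of a' a "exp (-x)"] ab
      unfolding cm_def exp_poly_shift ind_1 by (simp add: abs_le_iff)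
    show "indicator {1..} x \<le> exp_poly cp np x"
      using P_x indicator_atMost_le_ramp[of a b "exp (-x)"] ab
      unfolding cp_def exp_poly_shift ind_1 by (simp add: abs_le_iff)
    show "exp_poly cp np x - exp_poly cm nm x \<le> 4 * d * (1 - exp (-x)) + indicator {1-\<eta>..1+\<eta>} x"
      using M_x P_x ramp_diff_le_indicator[of a' a a b "exp (-x)"] ab
      unfolding cm_def cp_def exp_poly_shift ind_eta by (simp add: abs_le_iff)
  qed
  show ?thesis
    by (rule that[of cm nm cp np]) (use lower upper gap M(2) P(2) in \<open>auto simp: cm_def cp_def\<close>)
qed

lemma exp_poly_sandwich_indicator_limit_gap:
  assumes g: "0 < g" "g < 1" and e: "0 < e"
  obtains cm nm cp np where
    "\<forall>x\<ge>0. exp_poly cm nm x \<le> indicator {1..} x" "\<forall>x\<ge>0. indicator {1..} x \<le> exp_poly cp np x"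
    "exp_poly_limit g cp np - exp_poly_limit g cm nm \<le> e"
proof -
  let ?G = "Gamma (1 - g)"
  \<comment> \<open>The weight \<open>x powr (-g-1)\<close> is at most \<open>2 powr (g+1)\<close> on \<open>[1-\<eta>, 1+\<eta>]\<close>, so the indicator
    of that interval costs at most \<open>K * \<eta>\<close> in the limit.\<close>
  define K where "K = g / ?G * 2 * (1/2) powr (-g-1)"
  have K: "0 \<le> K"
    using g by (simp add: K_def Gamma_real_pos)
  define \<eta> where "\<eta> = min (1/2) (e / (2 * (K + 1)))"
  have eta: "0 < \<eta>" "\<eta> \<le> 1/2" "K * \<eta> \<le> e / 2"
  proof -
    show "0 < \<eta>"
      using e K by (simp add: \<eta>_def)
    show "\<eta> \<le> 1/2"
      unfolding \<eta>_def by (rule min.cobounded1)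
    have "K * \<eta> \<le> K * (e / (2 * (K + 1)))"
      using K by (intro mult_left_mono) (simp_all add: \<eta>_def)
    also have "\<dots> = e / 2 * (K / (K + 1))"
      using K by (simp add: field_simps)
    also have "\<dots> \<le> e / 2"
      using K e by (intro mult_left_le) auto
    finally show "K * \<eta> \<le> e / 2" .
  qed
  obtain cm nm cp np where c:
    "\<forall>x\<ge>0. exp_poly cm nm x \<le> indicator {1..} x" "\<forall>x\<ge>0. indicator {1..} x \<le> exp_poly cp np x"
    "\<forall>x\<ge>0. exp_poly cp np x - exp_poly cm nm x \<le> 4 * (e / 8) * (1 - exp (-x)) + indicator {1-\<eta>..1+\<eta>} x"
    "1 - 2 * (e / 8) \<le> cm 0" "cp 0 \<le> 1 + 2 * (e / 8)"
    by (rule exp_poly_sandwich_indicator[of \<eta> "e / 8"]) (use e eta in auto)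
  have "g / ?G * (((1 + \<eta>) - (1 - \<eta>)) * (1 - \<eta>) powr (-g-1)) = (g / ?G * 2 * \<eta>) * (1 - \<eta>) powr (-g-1)"
    by (simp add: algebra_simps)
  also have "\<dots> \<le> (g / ?G * 2 * \<eta>) * (1/2) powr (-g-1)"
    using g eta by (intro mult_left_mono powr_mono2') (auto simp: Gamma_real_pos)
  also have "\<dots> = K * \<eta>"
    by (simp add: K_def)
  finally have "exp_poly_limit g cp np - exp_poly_limit g cm nm \<le> e"
    using exp_poly_limit_diff_le[OF g _ _ c(3)] eta by auto
  with c(1,2) show ?thesis
    by (rule that)
qed

lemma exp_poly_approx_indicator:
  assumes g: "0 \<le> g" "g < 1" and e: "0 < e"
  obtains cm nm cp np where
    "\<forall>x\<ge>0. exp_poly cm nm x \<le> indicator {1..} x" "\<forall>x\<ge>0. indicator {1..} x \<le> exp_poly cp np x"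
    "1 / Gamma (1 - g) - e \<le> exp_poly_limit g cm nm" "exp_poly_limit g cp np \<le> 1 / Gamma (1 - g) + e"
proof (cases "g = 0")
  case True
  obtain cm nm cp np where
    "\<forall>x\<ge>0. exp_poly cm nm x \<le> indicator {1..} x" "\<forall>x\<ge>0. indicator {1..} x \<le> exp_poly cp np x"
    "\<forall>x\<ge>0. exp_poly cp np x - exp_poly cm nm x \<le> 4 * (e / 2) * (1 - exp (-x)) + indicator {1-1/2..1+1/2} x"
    "1 - 2 * (e / 2) \<le> cm 0" "cp 0 \<le> 1 + 2 * (e / 2)"
    by (rule exp_poly_sandwich_indicator[of "1/2" "e / 2"]) (use e in auto)
  with True show ?thesis
    by (intro that) (auto simp: exp_poly_limit_0)
next
  case False
  with g have g: "0 < g" "g < 1"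
    by auto
  obtain cm nm cp np where c:
    "\<forall>x\<ge>0. exp_poly cm nm x \<le> indicator {1..} x" "\<forall>x\<ge>0. indicator {1..} x \<le> exp_poly cp np x"
    "exp_poly_limit g cp np - exp_poly_limit g cm nm \<le> e"
    using exp_poly_sandwich_indicator_limit_gap[OF g e] by blast
  then show ?thesis
    using exp_poly_limit_le_if_below_indicator[OF g c(1)] exp_poly_limit_ge_if_above_indicator[OF g c(2)]
    by (intro that[OF c(1,2)]) auto
qed

section \<open>Exponential polynomials of a subordinator\<close>

lemma subordinator_nonneg:
  assumes "subordinator M T" "0 \<le> t" "\<omega> \<in> space M"
  shows "0 \<le> T t \<omega>"
proof -
  have "mono_on {0..} (\<lambda>t. T t \<omega>)" "T 0 \<omega> = 0"
    using assms unfolding subordinator_def by auto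
  then show ?thesis
    using assms(2) by (metis atLeast_iff mono_onD order_refl)
qed

lemma integrable_exp_subordinator:
  assumes sub: "subordinator M T" and t: "0 \<le> t" and s: "0 \<le> s"
  shows "integrable M (\<lambda>\<omega>. exp (- s * T t \<omega>))"
proof -
  interpret prob_space M
    using sub by (simp add: subordinator_def)
  have [measurable]: "T t \<in> borel_measurable M"
    using sub t by (simp add: subordinator_def)
  show ?thesis
  proof (rule integrable_const_bound[where B = 1])
    show "AE \<omega> in M. norm (exp (- s * T t \<omega>)) \<le> 1"
    proof (rule AE_I2)
      fix \<omega>
      assume "\<omega> \<in> space M"
      then have "0 \<le> s * T t \<omega>"
        using subordinator_nonneg[OF sub t] s by simp
      then show "norm (exp (- s * T t \<omega>)) \<le> 1"
        by simp
    qed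
  qed measurable
qed

lemma has_bochner_integral_exp_poly_subordinator:
  assumes sub: "subordinator M T" and t: "0 \<le> t" and r: "0 < r"
  shows "has_bochner_integral M (\<lambda>\<omega>. exp_poly c n (T t \<omega> / r))
    (\<Sum>k\<le>n. c k * ((\<integral>\<omega>. exp (- (real k * (1 / r)) * T t \<omega>) \<partial>M) - (\<integral>\<omega>. exp (- (real (Suc k) * (1 / r)) * T t \<omega>) \<partial>M)))"
proof -
  have eq: "exp_poly c n (T t \<omega> / r)
      = (\<Sum>k\<le>n. c k * (exp (- (real k * (1 / r)) * T t \<omega>) - exp (- (real (Suc k) * (1 / r)) * T t \<omega>)))" for \<omega>
    unfolding exp_poly_def by (simp add: field_simps)
  have "has_bochner_integral M (\<lambda>\<omega>. \<Sum>k\<le>n. c k * (exp (- (real k * (1 / r)) * T t \<omega>) - exp (- (real (Suc k) * (1 / r)) * T t \<omega>)))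
    (\<Sum>k\<le>n. c k * ((\<integral>\<omega>. exp (- (real k * (1 / r)) * T t \<omega>) \<partial>M) - (\<integral>\<omega>. exp (- (real (Suc k) * (1 / r)) * T t \<omega>) \<partial>M)))"
    using r by (intro has_bochner_integral_sum has_bochner_integral_mult_right has_bochner_integral_diff
        has_bochner_integral_integrable integrable_exp_subordinator[OF sub t]) auto
  then show ?thesis
    unfolding eq .
qed

lemma has_bochner_integral_indicator_subordinator:
  assumes sub: "subordinator M T" and t: "0 \<le> t" and r: "0 < r"
  shows "has_bochner_integral M (\<lambda>\<omega>. indicator {1..} (T t \<omega> / r)) (measure M {\<omega> \<in> space M. r \<le> T t \<omega>})"
proof -
  interpret prob_space M
    using sub by (simp add: subordinator_def)
  have [measurable]: "T t \<in> borel_measurable M"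
    using sub t by (simp add: subordinator_def)
  have "{\<omega> \<in> space M. r \<le> T t \<omega>} \<in> sets M"
    by measurable
  then have "has_bochner_integral M (indicator {\<omega> \<in> space M. r \<le> T t \<omega>}) (measure M {\<omega> \<in> space M. r \<le> T t \<omega>})"
    by (intro has_bochner_integral_real_indicator) (simp_all add: less_top[symmetric])
  then show ?thesis
    by (rule has_bochner_integral_cong[THEN iffD1, rotated -1]) (simp_all add: indicator_def le_divide_eq r)
qed

lemma integral_exp_poly_le_tail_probability:
  assumes sub: "subordinator M T" and tr: "0 \<le> t" "0 < r"
    and below: "\<forall>x\<ge>0. exp_poly c n x \<le> indicator {1..} x"
  shows "(\<integral>\<omega>. exp_poly c n (T t \<omega> / r) \<partial>M) \<le> measure M {\<omega> \<in> space M. r \<le> T t \<omega>}"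
proof -
  have E: "has_bochner_integral M (\<lambda>\<omega>. exp_poly c n (T t \<omega> / r)) (\<integral>\<omega>. exp_poly c n (T t \<omega> / r) \<partial>M)"
    using has_bochner_integral_exp_poly_subordinator[OF sub tr]
    by (intro has_bochner_integral_integrable integrable.intros)
  have AE: "AE \<omega> in M. exp_poly c n (T t \<omega> / r) \<le> indicator {1..} (T t \<omega> / r)"
    using below[rule_format, OF divide_nonneg_pos[OF subordinator_nonneg[OF sub tr(1)] tr(2)]] by (rule AE_I2)
  show ?thesis
    using has_bochner_integral_mono[OF E has_bochner_integral_indicator_subordinator[OF sub tr] AE] .
qed

lemma tail_probability_le_integral_exp_poly:
  assumes sub: "subordinator M T" and tr: "0 \<le> t" "0 < r"
    and above: "\<forall>x\<ge>0. indicator {1..} x \<le> exp_poly c n x"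
  shows "measure M {\<omega> \<in> space M. r \<le> T t \<omega>} \<le> (\<integral>\<omega>. exp_poly c n (T t \<omega> / r) \<partial>M)"
proof -
  have E: "has_bochner_integral M (\<lambda>\<omega>. exp_poly c n (T t \<omega> / r)) (\<integral>\<omega>. exp_poly c n (T t \<omega> / r) \<partial>M)"
    using has_bochner_integral_exp_poly_subordinator[OF sub tr]
    by (intro has_bochner_integral_integrable integrable.intros)
  have AE: "AE \<omega> in M. indicator {1..} (T t \<omega> / r) \<le> exp_poly c n (T t \<omega> / r)"
    using above[rule_format, OF divide_nonneg_pos[OF subordinator_nonneg[OF sub tr(1)] tr(2)]] by (rule AE_I2)
  show ?thesis
    using has_bochner_integral_mono[OF has_bochner_integral_indicator_subordinator[OF sub tr] E AE] .
qed

section \<open>The joint limit\<close>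

(* Pairs (t, r) in (0, oo)^2 with r tending along A and h t r tending to 0, as in
   joint_equiv_r_top and joint_equiv_r_0. *)
definition joint_filter :: "real filter \<Rightarrow> (real \<Rightarrow> real \<Rightarrow> real) \<Rightarrow> (real \<times> real) filter" where
  "joint_filter A h = filtercomap snd A \<sqinter> filtercomap (\<lambda>(t, r). h t r) (nhds 0) \<sqinter> principal ({0<..} \<times> {0<..})"

lemma eventually_joint_filter_pos: "\<forall>\<^sub>F p in joint_filter A h. 0 < fst p \<and> 0 < snd p"
  unfolding joint_filter_def eventually_inf_principal by (rule always_eventually) auto

lemma tendsto_joint_filter: "((\<lambda>p. h (fst p) (snd p)) \<longlongrightarrow> 0) (joint_filter A h)"
proof -
  have "joint_filter A h \<le> filtercomap (\<lambda>(t, r). h t r) (nhds 0)"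
    unfolding joint_filter_def by (meson inf_le1 inf_le2 order_trans)
  from filterlim_mono[OF filterlim_filtercomap order_refl this] show ?thesis
    by (simp add: case_prod_unfold)
qed

lemma filterlim_snd_joint_filter: "filterlim snd A (joint_filter A h)"
proof -
  have "joint_filter A h \<le> filtercomap snd A"
    unfolding joint_filter_def by (meson inf_le1 order_trans)
  from filterlim_mono[OF filterlim_filtercomap order_refl this] show ?thesis .
qed

lemma eventually_joint_filterE:
  assumes "\<forall>\<^sub>F p in joint_filter A h. Q p"
  obtains P \<delta> where "eventually P A" "0 < \<delta>" "\<And>t r. 0 < t \<Longrightarrow> 0 < r \<Longrightarrow> P r \<Longrightarrow> \<bar>h t r\<bar> < \<delta> \<Longrightarrow> Q (t, r)"
proof -
  from assms have "\<forall>\<^sub>F p in filtercomap snd A \<sqinter> filtercomap (\<lambda>(t, r). h t r) (nhds 0). p \<in> {0<..} \<times> {0<..} \<longrightarrow> Q p"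
    by (simp add: joint_filter_def eventually_inf_principal)
  then obtain Q1 Q2 where Q1: "eventually Q1 (filtercomap snd A)"
    and Q2: "eventually Q2 (filtercomap (\<lambda>(t, r). h t r) (nhds 0))"
    and Q: "\<forall>p. Q1 p \<and> Q2 p \<longrightarrow> p \<in> {0<..} \<times> {0<..} \<longrightarrow> Q p"
    unfolding eventually_inf by blast
  obtain P where P: "eventually P A" "\<And>p. P (snd p) \<Longrightarrow> Q1 p"
    using Q1 unfolding eventually_filtercomap by blast
  obtain P2 where P2: "eventually P2 (nhds 0)" "\<And>p. P2 (case p of (t, r) \<Rightarrow> h t r) \<Longrightarrow> Q2 p"
    using Q2 unfolding eventually_filtercomap by blast
  obtain \<delta> where \<delta>: "0 < \<delta>" "\<And>x. dist x 0 < \<delta> \<Longrightarrow> P2 x"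
    using P2(1) unfolding eventually_nhds_metric by blast
  show ?thesis
  proof (rule that[OF P(1) \<delta>(1)])
    fix t r
    assume "0 < t" "0 < r" "P r" "\<bar>h t r\<bar> < \<delta>"
    then have "Q1 (t, r)" "Q2 (t, r)"
      using P(2)[of "(t, r)"] P2(2)[of "(t, r)"] \<delta>(2)[of "h t r"] by (simp_all add: dist_real_def)
    with \<open>0 < t\<close> \<open>0 < r\<close> show "Q (t, r)"
      using Q by simp
  qed
qed

lemma joint_equiv_r_top_if_tendsto:
  assumes lim: "((\<lambda>(t, r). f t r / g t r) \<longlongrightarrow> 1) (joint_filter at_top h)"
    and h_nonneg: "\<And>t r. 0 < t \<Longrightarrow> 0 < r \<Longrightarrow> 0 \<le> h t r"
  shows "joint_equiv_r_top f g h"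
  unfolding joint_equiv_r_top_def
proof (intro allI impI)
  fix \<epsilon> :: real
  assume "0 < \<epsilon>"
  with lim have "\<forall>\<^sub>F p in joint_filter at_top h. \<bar>f (fst p) (snd p) / g (fst p) (snd p) - 1\<bar> < \<epsilon>"
    by (auto simp: tendsto_iff dist_real_def case_prod_unfold)
  then obtain P \<delta> where P: "eventually P at_top" and \<delta>: "0 < \<delta>"
    and Q: "\<And>t r. 0 < t \<Longrightarrow> 0 < r \<Longrightarrow> P r \<Longrightarrow> \<bar>h t r\<bar> < \<delta> \<Longrightarrow> \<bar>f t r / g t r - 1\<bar> < \<epsilon>"
    by (rule eventually_joint_filterE) auto
  from P obtain R where R: "\<And>r. R \<le> r \<Longrightarrow> P r"
    unfolding eventually_at_top_linorder by blast
  have "\<bar>f t r / g t r - 1\<bar> < \<epsilon>" if "0 < t" "0 < r" "R < r" "h t r < \<delta>" for t r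
    using that by (intro Q R) (simp_all add: h_nonneg)
  with \<delta> show "\<exists>R \<delta>. 0 < \<delta> \<and> (\<forall>t r. 0 < t \<longrightarrow> 0 < r \<longrightarrow> R < r \<longrightarrow> h t r < \<delta> \<longrightarrow> \<bar>f t r / g t r - 1\<bar> < \<epsilon>)"
    by blast
qed

lemma joint_equiv_r_0_if_tendsto:
  assumes lim: "((\<lambda>(t, r). f t r / g t r) \<longlongrightarrow> 1) (joint_filter (at_right 0) h)"
    and h_nonneg: "\<And>t r. 0 < t \<Longrightarrow> 0 < r \<Longrightarrow> 0 \<le> h t r"
  shows "joint_equiv_r_0 f g h"
  unfolding joint_equiv_r_0_def
proof (intro allI impI)
  fix \<epsilon> :: real
  assume "0 < \<epsilon>"
  with lim have "\<forall>\<^sub>F p in joint_filter (at_right 0) h. \<bar>f (fst p) (snd p) / g (fst p) (snd p) - 1\<bar> < \<epsilon>"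
    by (auto simp: tendsto_iff dist_real_def case_prod_unfold)
  then obtain P \<delta> where P: "eventually P (at_right 0)" and \<delta>: "0 < \<delta>"
    and Q: "\<And>t r. 0 < t \<Longrightarrow> 0 < r \<Longrightarrow> P r \<Longrightarrow> \<bar>h t r\<bar> < \<delta> \<Longrightarrow> \<bar>f t r / g t r - 1\<bar> < \<epsilon>"
    by (rule eventually_joint_filterE) auto
  from P obtain \<rho> where \<rho>: "0 < \<rho>" "\<And>r. 0 < r \<Longrightarrow> r < \<rho> \<Longrightarrow> P r"
    unfolding eventually_at_right_field by blast
  have "\<bar>f t r / g t r - 1\<bar> < \<epsilon>" if "0 < t" "0 < r" "r < \<rho>" "h t r < \<delta>" for t r
    using that by (intro Q \<rho>(2)) (simp_all add: h_nonneg)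
  with \<delta> \<rho>(1) show "\<exists>\<rho> \<delta>. 0 < \<rho> \<and> 0 < \<delta> \<and> (\<forall>t r. 0 < t \<longrightarrow> 0 < r \<longrightarrow> r < \<rho> \<longrightarrow> h t r < \<delta> \<longrightarrow> \<bar>f t r / g t r - 1\<bar> < \<epsilon>)"
    by blast
qed

lemma tendsto_one_minus_exp_div:
  fixes u D :: "'a \<Rightarrow> real"
  assumes D: "(D \<longlongrightarrow> 0) F" and ratio: "((\<lambda>x. u x / D x) \<longlongrightarrow> L) F"
    and pos: "\<forall>\<^sub>F x in F. 0 < u x \<and> 0 < D x"
  shows "((\<lambda>x. (1 - exp (- u x)) / D x) \<longlongrightarrow> L) F"
proof -
  have "((\<lambda>x. D x * (u x / D x)) \<longlongrightarrow> 0) F"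
    using tendsto_mult[OF D ratio] by simp
  then have "(u \<longlongrightarrow> 0) F"
    by (rule Lim_transform_eventually) (use pos in \<open>auto elim: eventually_mono\<close>)
  then have u: "filterlim u (at_right 0) F"
    using pos by (auto intro: tendsto_imp_filterlim_at_right elim: eventually_mono)
  have "((\<lambda>v::real. 1 - exp (- v)) has_real_derivative 1) (at 0)"
    by (auto intro!: derivative_eq_intros)
  then have "((\<lambda>v::real. (1 - exp (- v)) / v) \<longlongrightarrow> 1) (at_right 0)"
    unfolding DERIV_def by (simp add: filterlim_at_split)
  from tendsto_mult[OF filterlim_compose[OF this u] ratio]
  have "((\<lambda>x. (1 - exp (- u x)) / u x * (u x / D x)) \<longlongrightarrow> L) F"
    by simp
  then show ?thesis
    by (rule Lim_transform_eventually) (use pos in \<open>auto elim: eventually_mono\<close>)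
qed

context
  fixes M :: "'a measure" and T :: "real \<Rightarrow> 'a \<Rightarrow> real" and \<phi> :: "real \<Rightarrow> real"
    and F :: "(real \<times> real) filter" and g :: real
  assumes sub: "subordinator M T" and lap: "laplace_exponent M T \<phi>"
    and \<phi>_pos: "\<And>s. 0 < s \<Longrightarrow> 0 < \<phi> s"
    and ratio: "\<And>c. 0 < c \<Longrightarrow> ((\<lambda>p. \<phi> (c * (1 / snd p)) / \<phi> (1 / snd p)) \<longlongrightarrow> c powr g) F"
    and small: "((\<lambda>p. fst p * \<phi> (1 / snd p)) \<longlongrightarrow> 0) F"
    and pos: "\<forall>\<^sub>F p in F. 0 < fst p \<and> 0 < snd p"
begin

lemma tendsto_laplace_ratio:
  "((\<lambda>p. (1 - (\<integral>\<omega>. exp (- (real k * (1 / snd p)) * T (fst p) \<omega>) \<partial>M)) / (fst p * \<phi> (1 / snd p)))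
     \<longlongrightarrow> real k powr g) F"
proof (cases "k = 0")
  case True
  interpret prob_space M
    using sub by (simp add: subordinator_def)
  show ?thesis
    using True by (simp add: prob_space)
next
  case False
  then have k: "0 < real k"
    by simp
  have "((\<lambda>p. (1 - exp (- (fst p * \<phi> (real k * (1 / snd p))))) / (fst p * \<phi> (1 / snd p))) \<longlongrightarrow> real k powr g) F"
  proof (rule tendsto_one_minus_exp_div[OF small])
    show "((\<lambda>p. fst p * \<phi> (real k * (1 / snd p)) / (fst p * \<phi> (1 / snd p))) \<longlongrightarrow> real k powr g) F"
      using ratio[OF k] by (rule Lim_transform_eventually) (use pos in \<open>auto elim: eventually_mono\<close>)
    show "\<forall>\<^sub>F p in F. 0 < fst p * \<phi> (real k * (1 / snd p)) \<and> 0 < fst p * \<phi> (1 / snd p)"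
      using pos by eventually_elim (use k \<phi>_pos in auto)
  qed
  then show ?thesis
  proof (rule Lim_transform_eventually)
    show "\<forall>\<^sub>F p in F. (1 - exp (- (fst p * \<phi> (real k * (1 / snd p))))) / (fst p * \<phi> (1 / snd p))
        = (1 - (\<integral>\<omega>. exp (- (real k * (1 / snd p)) * T (fst p) \<omega>) \<partial>M)) / (fst p * \<phi> (1 / snd p))"
      using pos
    proof eventually_elim
      case (elim p)
      have "(\<integral>\<omega>. exp (- (real k * (1 / snd p)) * T (fst p) \<omega>) \<partial>M) = exp (- fst p * \<phi> (real k * (1 / snd p)))"
        by (rule lap[unfolded laplace_exponent_def, rule_format]) (use elim k in auto)
      then show ?case
        by simp
    qed
  qed
qed

lemma tendsto_integral_exp_poly_ratio:
  "((\<lambda>p. (\<integral>\<omega>. exp_poly c n (T (fst p) \<omega> / snd p) \<partial>M) / (fst p * \<phi> (1 / snd p))) \<longlongrightarrow> exp_poly_limit g c n) F"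
proof -
  let ?R = "\<lambda>k p. (1 - (\<integral>\<omega>. exp (- (real k * (1 / snd p)) * T (fst p) \<omega>) \<partial>M)) / (fst p * \<phi> (1 / snd p))"
  have "((\<lambda>p. \<Sum>k\<le>n. c k * (?R (Suc k) p - ?R k p)) \<longlongrightarrow> exp_poly_limit g c n) F"
    unfolding exp_poly_limit_def by (intro tendsto_intros tendsto_laplace_ratio)
  then show ?thesis
  proof (rule Lim_transform_eventually)
    show "\<forall>\<^sub>F p in F. (\<Sum>k\<le>n. c k * (?R (Suc k) p - ?R k p)) = (\<integral>\<omega>. exp_poly c n (T (fst p) \<omega> / snd p) \<partial>M) / (fst p * \<phi> (1 / snd p))"
      using pos
    proof eventually_elim
      case (elim p)
      have "(\<integral>\<omega>. exp_poly c n (T (fst p) \<omega> / snd p) \<partial>M)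
          = (\<Sum>k\<le>n. c k * ((1 - (\<integral>\<omega>. exp (- (real (Suc k) * (1 / snd p)) * T (fst p) \<omega>) \<partial>M))
                              - (1 - (\<integral>\<omega>. exp (- (real k * (1 / snd p)) * T (fst p) \<omega>) \<partial>M))))"
        using has_bochner_integral_integral_eq[OF has_bochner_integral_exp_poly_subordinator[OF sub, of "fst p" "snd p" c n]]
          elim by simp
      then show ?case
        by (simp only: sum_divide_distrib times_divide_eq_right[symmetric] diff_divide_distrib)
    qed
  qed
qed

lemma eventually_less_tail_probability_ratio:
  assumes g: "0 \<le> g" "g < 1" and a: "a < 1 / Gamma (1 - g)"
  shows "\<forall>\<^sub>F p in F. a < measure M {\<omega> \<in> space M. snd p \<le> T (fst p) \<omega>} / (fst p * \<phi> (1 / snd p))"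
proof -
  obtain cm nm cp np where
    "\<forall>x\<ge>0. exp_poly cm nm x \<le> indicator {1..} x" "\<forall>x\<ge>0. indicator {1..} x \<le> exp_poly cp np x"
    "1 / Gamma (1 - g) - (1 / Gamma (1 - g) - a) / 2 \<le> exp_poly_limit g cm nm"
    "exp_poly_limit g cp np \<le> 1 / Gamma (1 - g) + (1 / Gamma (1 - g) - a) / 2"
    by (rule exp_poly_approx_indicator[OF g]) (use a in auto)
  note c = this
  have "a < exp_poly_limit g cm nm"
    using c(3) a by argo
  then have "\<forall>\<^sub>F p in F. a < (\<integral>\<omega>. exp_poly cm nm (T (fst p) \<omega> / snd p) \<partial>M) / (fst p * \<phi> (1 / snd p))"
    by (rule order_tendstoD(1)[OF tendsto_integral_exp_poly_ratio])
  then show ?thesis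
    using pos
  proof eventually_elim
    case (elim p)
    then have t: "0 \<le> fst p" and r: "0 < snd p"
      by auto
    have D: "0 \<le> fst p * \<phi> (1 / snd p)"
      using elim \<phi>_pos[of "1 / snd p"] by simp
    from divide_right_mono[OF integral_exp_poly_le_tail_probability[OF sub t r c(1)] D] elim(1)
    show ?case
      by argo
  qed
qed

lemma eventually_tail_probability_ratio_less:
  assumes g: "0 \<le> g" "g < 1" and a: "1 / Gamma (1 - g) < a"
  shows "\<forall>\<^sub>F p in F. measure M {\<omega> \<in> space M. snd p \<le> T (fst p) \<omega>} / (fst p * \<phi> (1 / snd p)) < a"
proof -
  obtain cm nm cp np where
    "\<forall>x\<ge>0. exp_poly cm nm x \<le> indicator {1..} x" "\<forall>x\<ge>0. indicator {1..} x \<le> exp_poly cp np x"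
    "1 / Gamma (1 - g) - (a - 1 / Gamma (1 - g)) / 2 \<le> exp_poly_limit g cm nm"
    "exp_poly_limit g cp np \<le> 1 / Gamma (1 - g) + (a - 1 / Gamma (1 - g)) / 2"
    by (rule exp_poly_approx_indicator[OF g]) (use a in auto)
  note c = this
  have "exp_poly_limit g cp np < a"
    using c(4) a by argo
  then have "\<forall>\<^sub>F p in F. (\<integral>\<omega>. exp_poly cp np (T (fst p) \<omega> / snd p) \<partial>M) / (fst p * \<phi> (1 / snd p)) < a"
    by (rule order_tendstoD(2)[OF tendsto_integral_exp_poly_ratio])
  then show ?thesis
    using pos
  proof eventually_elim
    case (elim p)
    then have t: "0 \<le> fst p" and r: "0 < snd p"
      by auto
    have D: "0 \<le> fst p * \<phi> (1 / snd p)"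
      using elim \<phi>_pos[of "1 / snd p"] by simp
    from divide_right_mono[OF tail_probability_le_integral_exp_poly[OF sub t r c(2)] D] elim(1)
    show ?case
      by argo
  qed
qed

lemma tendsto_tail_probability_ratio:
  assumes "0 \<le> g" "g < 1"
  shows "((\<lambda>p. measure M {\<omega> \<in> space M. snd p \<le> T (fst p) \<omega>} / (fst p * \<phi> (1 / snd p))) \<longlongrightarrow> 1 / Gamma (1 - g)) F"
  using eventually_less_tail_probability_ratio[OF assms] eventually_tail_probability_ratio_less[OF assms]
  by (rule order_tendstoI)

end

lemma tendsto_tail_probability_joint:
  assumes sub: "subordinator M T" and lap: "laplace_exponent M T \<phi>" and g: "0 \<le> g" "g < 1"
    and \<phi>_pos: "\<And>s. 0 < s \<Longrightarrow> 0 < \<phi> s"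
    and regvar: "\<And>c. 0 < c \<Longrightarrow> ((\<lambda>s. \<phi> (c * s) / \<phi> s) \<longlongrightarrow> c powr g) B"
    and inverse: "filterlim (\<lambda>r. 1 / r) B A"
  shows "((\<lambda>(t, r). measure M {\<omega> \<in> space M. T t \<omega> \<ge> r} / (t * \<phi> (1 / r) / Gamma (1 - g))) \<longlongrightarrow> 1)
           (joint_filter A (\<lambda>t r. t * \<phi> (1 / r)))"
proof -
  let ?F = "joint_filter A (\<lambda>t r. t * \<phi> (1 / r))"
  have ratio: "((\<lambda>p. \<phi> (c * (1 / snd p)) / \<phi> (1 / snd p)) \<longlongrightarrow> c powr g) ?F" if "0 < c" for c
    using filterlim_compose[OF regvar[OF that] filterlim_compose[OF inverse filterlim_snd_joint_filter]] .
  have "((\<lambda>p. measure M {\<omega> \<in> space M. snd p \<le> T (fst p) \<omega>} / (fst p * \<phi> (1 / snd p))) \<longlongrightarrow> 1 / Gamma (1 - g)) ?F"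
    using tendsto_tail_probability_ratio[OF sub lap \<phi>_pos ratio tendsto_joint_filter eventually_joint_filter_pos g]
    by simp
  from tendsto_mult_left[OF this, of "Gamma (1 - g)"]
  have "((\<lambda>p. Gamma (1 - g) * (measure M {\<omega> \<in> space M. snd p \<le> T (fst p) \<omega>} / (fst p * \<phi> (1 / snd p))))
      \<longlongrightarrow> 1) ?F"
    using g Gamma_real_pos[of "1 - g"] by (simp add: less_imp_neq[OF Gamma_real_pos, symmetric])
  moreover have "(\<lambda>(t, r). measure M {\<omega> \<in> space M. T t \<omega> \<ge> r} / (t * \<phi> (1 / r) / Gamma (1 - g)))
      = (\<lambda>p. Gamma (1 - g) * (measure M {\<omega> \<in> space M. snd p \<le> T (fst p) \<omega>} / (fst p * \<phi> (1 / snd p))))"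
    by (rule ext) (simp add: case_prod_unfold mult.commute)
  ultimately show ?thesis
    by simp
qed

theorem corollary1p2:
  fixes M :: "'a measure" and T :: "real \<Rightarrow> 'a \<Rightarrow> real"
    and \<phi> :: "real \<Rightarrow> real" and \<gamma> :: real
  assumes "subordinator M T"
    and "laplace_exponent M T \<phi>"
    and "0 \<le> \<gamma>" and "\<gamma> < 1"
  shows "(regvar_at_0 \<phi> \<gamma> \<longrightarrow>
           joint_equiv_r_top (\<lambda>t r. measure M {\<omega> \<in> space M. T t \<omega> \<ge> r})
             (\<lambda>t r. t * \<phi> (1 / r) / Gamma (1 - \<gamma>)) (\<lambda>t r. t * \<phi> (1 / r)))
       \<and> (regvar_at_top \<phi> \<gamma> \<longrightarrow>
           joint_equiv_r_0 (\<lambda>t r. measure M {\<omega> \<in> space M. T t \<omega> \<ge> r})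
             (\<lambda>t r. t * \<phi> (1 / r) / Gamma (1 - \<gamma>)) (\<lambda>t r. t * \<phi> (1 / r)))"
proof (intro conjI impI)
  assume "regvar_at_0 \<phi> \<gamma>"
  then have pos: "\<And>s. 0 < s \<Longrightarrow> 0 < \<phi> s"
    and regvar: "\<And>c. 0 < c \<Longrightarrow> ((\<lambda>s. \<phi> (c * s) / \<phi> s) \<longlongrightarrow> c powr \<gamma>) (at_right 0)"
    by (auto simp: regvar_at_0_def)
  have "filterlim (\<lambda>r::real. 1 / r) (at_right 0) at_top"
    using filterlim_inverse_at_right_top by (simp add: inverse_eq_divide)
  from tendsto_tail_probability_joint[OF assms pos regvar this]
  show "joint_equiv_r_top (\<lambda>t r. measure M {\<omega> \<in> space M. T t \<omega> \<ge> r})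
      (\<lambda>t r. t * \<phi> (1 / r) / Gamma (1 - \<gamma>)) (\<lambda>t r. t * \<phi> (1 / r))"
    by (rule joint_equiv_r_top_if_tendsto) (auto intro!: less_imp_le mult_pos_pos pos)
next
  assume "regvar_at_top \<phi> \<gamma>"
  then have pos: "\<And>s. 0 < s \<Longrightarrow> 0 < \<phi> s"
    and regvar: "\<And>c. 0 < c \<Longrightarrow> ((\<lambda>s. \<phi> (c * s) / \<phi> s) \<longlongrightarrow> c powr \<gamma>) at_top"
    by (auto simp: regvar_at_top_def)
  have "filterlim (\<lambda>r::real. 1 / r) at_top (at_right 0)"
    using filterlim_inverse_at_top_right by (simp add: inverse_eq_divide)
  from tendsto_tail_probability_joint[OF assms pos regvar this]
  show "joint_equiv_r_0 (\<lambda>t r. measure M {\<omega> \<in> space M. T t \<omega> \<ge> r})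
      (\<lambda>t r. t * \<phi> (1 / r) / Gamma (1 - \<gamma>)) (\<lambda>t r. t * \<phi> (1 / r))"
    by (rule joint_equiv_r_0_if_tendsto) (auto intro!: less_imp_le mult_pos_pos pos)
qed

end
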